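(* Let $X$ be a real Hilbert space, $W$ a real Banach space, $A\subset W$ closed, $r>0$, $T>0$, and let $\{Z(w);w\in A\}$ be a family of $r$-prox-regular subsets of $X$ satisfying: for every $\varepsilon>0$ there is $\delta>0$ such that $|w-\hat w|_W<\delta$ implies $d_H(Z(w),Z(\hat w))<\varepsilon$. Let $y\in G_R(0,T;X)$ and $w\in G_R(0,T;W)$ be such that $w(t)\in A$ and $\mathrm{dist}(y(t),Z(w(t)))\le r/2$ for every $t\in[0,T]$. Let $\zeta:[0,T]\to X$ be defined so that $\zeta(t)$ is the only vector in $Z(w(t))$ such that $$\langle y(t)-\zeta(t),\zeta(t)-z\rangle+\frac{|y(t)-\zeta(t)|}{2r}|\zeta(t)-z|^2\ge0\quad\forall z\in Z(w(t)).$$ Then $\zeta\in G_R(0,T;X)$.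
   Context: $X$ is a real Hilbert space with scalar product $\langle\cdot,\cdot\rangle$ and norm $|\cdot|$; $W$ a real Banach space with norm $|\cdot|_W$; $\mathrm{dist}(x,Z)=\inf_{z\in Z}|x-z|$; $d_H(Z,\hat Z)=\max\{\sup_{z\in Z}\mathrm{dist}(z,\hat Z),\sup_{\hat z\in\hat Z}\mathrm{dist}(\hat z,Z)\}$. A closed connected $Z\subset X$ is $r$-prox-regular if for every $y\in X$ with $\mathrm{dist}(y,Z)=d\in(0,r)$ there is $x\in Z$ with $\mathrm{dist}(x+\frac rd(y-x),Z)=\frac rd|y-x|=r$. For a Banach space $E$, $G_R(0,T;E)$ is the space of right-continuous regulated functions $f:[0,T]\to E$, i.e. functions with one-sided limits $f(t-)$, $f(t+)$ at every point and $f(t+)=f(t)$. *)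

theory Defs
  imports "HOL-Analysis.Analysis"
begin

definition prox_regular :: "real \<Rightarrow> 'a::real_inner set \<Rightarrow> bool" where
  "prox_regular r Z \<longleftrightarrow> closed Z \<and> connected Z \<and>
     (\<forall>y d. infdist y Z = d \<and> 0 < d \<and> d < r \<longrightarrow>
        (\<exists>x\<in>Z. infdist (x + (r / d) *\<^sub>R (y - x)) Z = (r / d) * norm (y - x)
                 \<and> (r / d) * norm (y - x) = r))"

definition hdist :: "'a::metric_space set \<Rightarrow> 'a set \<Rightarrow> ereal" where
  "hdist Z Z' = max (SUP z\<in>Z. ereal (infdist z Z')) (SUP z'\<in>Z'. ereal (infdist z' Z))"

definition regulated_rc :: "real \<Rightarrow> (real \<Rightarrow> 'a::real_normed_vector) \<Rightarrow> bool" where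
  "regulated_rc T f \<longleftrightarrow>
     (\<forall>t\<in>{0<..T}. \<exists>l. (f \<longlongrightarrow> l) (at t within {0..<t})) \<and>
     (\<forall>t\<in>{0..<T}. (f \<longlongrightarrow> f t) (at t within {t<..T}))"

end

theory Submission
  imports Defs
begin

(*
  Because y(t) lies within r/2 of the r-prox-regular set Z(w(t)), the unique solution
  \<zeta>(t) of the variational inequality is the metric projection of y(t), so
  |y(t) - \<zeta>(t)| \<le> r/2. Testing the inequalities at two times s, s' against points of
  each set lying within e of the other projection (possible when d_H(Z(w(s)), Z(w(s'))) < e) gives
    |\<zeta>(s) - \<zeta>(s')| \<le> 2 (|y(s) - y(s')| + e) + sqrt (2 r e + e^2).
  Together with the uniform continuity of Z in d_H, small increments of (y, w) therefore force
  small increments of \<zeta>; one-sided Cauchy behaviour of the regulated pair (y, w) transfers to \<zeta>,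
  and completeness of X yields its one-sided limits.
*)

lemma hdist_commute: "hdist Z Z' = hdist Z' Z"
  unfolding hdist_def by (simp add: max.commute)

lemma hdist_less_imp_near:
  assumes "hdist Z Z' < ereal e" and "z \<in> Z" and "Z' \<noteq> {}"
  shows "\<exists>z'\<in>Z'. dist z z' < e"
proof -
  have "ereal (infdist z Z') \<le> (SUP z\<in>Z. ereal (infdist z Z'))"
    using \<open>z \<in> Z\<close> by (rule SUP_upper)
  also have "\<dots> \<le> hdist Z Z'"
    unfolding hdist_def by simp
  finally have "ereal (infdist z Z') < ereal e"
    using assms(1) by (rule order.strict_trans1)
  then have "infdist z Z' < e"
    by simp
  then show ?thesis
    using \<open>Z' \<noteq> {}\<close> by (simp add: infdist_notempty cINF_less_iff)
qed

lemma square_le_linear_imp_le: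
  fixes D a b :: real
  assumes "D\<^sup>2 \<le> 2 * a * D + b" and "a \<ge> 0" and "b \<ge> 0" and "D \<ge> 0"
  shows "D \<le> 2 * a + sqrt b"
proof (cases "D \<le> 2 * a")
  case True
  then show ?thesis using real_sqrt_ge_zero[OF \<open>b \<ge> 0\<close>] by linarith
next
  case False
  have "(D - 2 * a)\<^sup>2 \<le> D * (D - 2 * a)"
    using False assms by (simp add: power2_eq_square mult_right_mono)
  also have "\<dots> \<le> b"
    using assms(1) by (simp add: power2_eq_square algebra_simps)
  finally have "D - 2 * a \<le> sqrt b"
    using False by (simp add: real_le_rsqrt)
  then show ?thesis by simp
qed

text \<open>The variational inequality of the theorem; on an \<open>r\<close>-prox-regular set it characterises
  the metric projection of \<open>y\<close>.\<close>
definition prox_proj :: "real \<Rightarrow> 'a::real_inner set \<Rightarrow> 'a \<Rightarrow> 'a \<Rightarrow> bool" where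
  "prox_proj r Z y x \<longleftrightarrow> x \<in> Z \<and>
     (\<forall>z\<in>Z. inner (y - x) (x - z) + norm (y - x) / (2 * r) * (norm (x - z))\<^sup>2 \<ge> 0)"

lemma prox_regular_nearest_point_prox_proj:
  fixes Z :: "'a::real_inner set"
  assumes pr: "prox_regular r Z" and "r > 0" and "Z \<noteq> {}" and "infdist y Z < r"
  shows "\<exists>x. prox_proj r Z y x \<and> norm (y - x) = infdist y Z"
proof (cases "infdist y Z = 0")
  case True
  have "y \<in> Z"
    using pr True \<open>Z \<noteq> {}\<close> in_closed_iff_infdist_zero unfolding prox_regular_def by blast
  then show ?thesis
    using True by (intro exI[of _ y]) (simp add: prox_proj_def)
next
  case False
  define d where "d = infdist y Z"
  have "0 < d" "d < r"
    using False infdist_nonneg[of y Z] \<open>infdist y Z < r\<close> unfolding d_def by linarith+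
  then obtain x where "x \<in> Z" and far: "infdist (x + (r / d) *\<^sub>R (y - x)) Z = r"
      and "(r / d) * norm (y - x) = r"
    using pr unfolding prox_regular_def d_def by fastforce
  then have yx: "norm (y - x) = d"
    using \<open>r > 0\<close> \<open>0 < d\<close> by (simp add: field_simps)
  have "inner (y - x) (x - z) + d / (2 * r) * (norm (x - z))\<^sup>2 \<ge> 0" if "z \<in> Z" for z
  proof -
    define c where "c = r / d"
    \<comment> \<open>\<open>z\<close> lies outside the open \<open>r\<close>-ball around \<open>x + c (y - x)\<close>, a point at distance \<open>r\<close> from \<open>Z\<close>\<close>
    have "r \<le> norm ((x - z) + c *\<^sub>R (y - x))"
      using infdist_le[OF that, of "x + c *\<^sub>R (y - x)"] far
      by (simp add: c_def dist_norm algebra_simps)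
    then have "r\<^sup>2 \<le> (norm ((x - z) + c *\<^sub>R (y - x)))\<^sup>2"
      using \<open>r > 0\<close> by (simp add: power_mono)
    also have "\<dots> = (norm (x - z))\<^sup>2 + 2 * c * inner (y - x) (x - z) + c\<^sup>2 * (norm (y - x))\<^sup>2"
      unfolding power2_norm_eq_inner
      by (simp add: inner_add_left inner_add_right inner_commute power2_eq_square algebra_simps)
    also have "c\<^sup>2 * (norm (y - x))\<^sup>2 = r\<^sup>2"
      using yx \<open>0 < d\<close> by (simp add: c_def field_simps power2_eq_square)
    finally have "0 \<le> (d / (2 * r)) * ((norm (x - z))\<^sup>2 + 2 * c * inner (y - x) (x - z))"
      using \<open>r > 0\<close> \<open>0 < d\<close> by simp
    also have "\<dots> = inner (y - x) (x - z) + d / (2 * r) * (norm (x - z))\<^sup>2"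
      using \<open>r > 0\<close> \<open>0 < d\<close> by (simp add: c_def field_simps)
    finally show ?thesis .
  qed
  then show ?thesis
    using \<open>x \<in> Z\<close> yx unfolding prox_proj_def d_def by auto
qed

lemma prox_proj_unique_imp_norm_eq_infdist:
  assumes "prox_regular r Z" and "r > 0" and "infdist y Z < r"
    and "prox_proj r Z y x" and unique: "\<And>v. prox_proj r Z y v \<Longrightarrow> v = x"
  shows "norm (y - x) = infdist y Z"
proof -
  have "Z \<noteq> {}"
    using \<open>prox_proj r Z y x\<close> unfolding prox_proj_def by auto
  then obtain v where "prox_proj r Z y v" "norm (y - v) = infdist y Z"
    using prox_regular_nearest_point_prox_proj assms(1-3) by blast
  then show ?thesis
    using unique by blast
qed

lemma prox_ineq_perturbed:
  fixes x y z x' :: "'a::real_inner"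
  assumes "r > 0" and "e \<ge> 0" and "norm (y - x) \<le> r / 2"
    and ineq: "inner (y - x) (x - z) + norm (y - x) / (2 * r) * (norm (x - z))\<^sup>2 \<ge> 0"
    and "norm (x' - z) \<le> e"
  shows "inner (y - x) (x' - x) \<le> r / 2 * e + 1 / 4 * (norm (x - x') + e)\<^sup>2"
proof -
  have "inner (y - x) (x' - z) \<le> norm (y - x) * norm (x' - z)"
    by (rule norm_cauchy_schwarz)
  also have "\<dots> \<le> r / 2 * e"
    using assms(1,3,5) by (intro mult_mono) auto
  finally have "inner (y - x) (x' - z) \<le> r / 2 * e" .
  moreover have "norm (y - x) / (2 * r) * (norm (x - z))\<^sup>2 \<le> 1 / 4 * (norm (x - x') + e)\<^sup>2"
  proof (rule mult_mono)
    show "norm (y - x) / (2 * r) \<le> 1 / 4"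
      using assms(1,3) by (simp add: field_simps)
    have "norm (x - z) \<le> norm (x - x') + e"
      using norm_triangle_ineq[of "x - x'" "x' - z"] assms(5) by simp
    then show "(norm (x - z))\<^sup>2 \<le> (norm (x - x') + e)\<^sup>2"
      by (simp add: power_mono)
  qed auto
  moreover have "inner (y - x) (x - z) = inner (y - x) (x' - z) - inner (y - x) (x' - x)"
    by (simp add: inner_diff_right)
  ultimately show ?thesis
    using ineq by linarith
qed

lemma prox_proj_hdist_estimate:
  fixes x1 x2 y1 y2 :: "'a::real_inner"
  assumes "r > 0"
    and proj1: "prox_proj r Z1 y1 x1" and near1: "norm (y1 - x1) \<le> r / 2"
    and proj2: "prox_proj r Z2 y2 x2" and near2: "norm (y2 - x2) \<le> r / 2"
    and "hdist Z1 Z2 < ereal e"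
  shows "dist x1 x2 \<le> 2 * (dist y1 y2 + e) + sqrt (2 * r * e + e\<^sup>2)"
proof -
  define D where "D = norm (x1 - x2)"
  have "x1 \<in> Z1" "x2 \<in> Z2"
    using proj1 proj2 unfolding prox_proj_def by auto
  moreover have "hdist Z2 Z1 < ereal e"
    using \<open>hdist Z1 Z2 < ereal e\<close> by (simp add: hdist_commute)
  ultimately obtain z1 z2 where "z1 \<in> Z1" "dist x2 z1 < e" "z2 \<in> Z2" "dist x1 z2 < e"
    using hdist_less_imp_near[OF \<open>hdist Z1 Z2 < ereal e\<close>] hdist_less_imp_near[of Z2 Z1 e]
    by blast
  then have "e > 0"
    using zero_le_dist[of x1 z2] by linarith
  have "inner (y1 - x1) (x2 - x1) \<le> r / 2 * e + 1 / 4 * (D + e)\<^sup>2"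
    using prox_ineq_perturbed[OF \<open>r > 0\<close> _ near1, where z = z1 and x' = x2 and e = e]
      proj1 \<open>z1 \<in> Z1\<close> \<open>dist x2 z1 < e\<close> \<open>e > 0\<close>
    unfolding prox_proj_def D_def dist_norm by auto
  moreover have "inner (y2 - x2) (x1 - x2) \<le> r / 2 * e + 1 / 4 * (D + e)\<^sup>2"
    using prox_ineq_perturbed[OF \<open>r > 0\<close> _ near2, where z = z2 and x' = x1 and e = e]
      proj2 \<open>z2 \<in> Z2\<close> \<open>dist x1 z2 < e\<close> \<open>e > 0\<close>
    unfolding prox_proj_def D_def dist_norm by (auto simp: norm_minus_commute)
  moreover have "inner (y1 - x1) (x2 - x1) + inner (y2 - x2) (x1 - x2)
      = D\<^sup>2 - inner (y1 - y2) (x1 - x2)"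
    unfolding D_def
    by (simp add: power2_norm_eq_inner inner_diff_left inner_diff_right inner_commute algebra_simps)
  moreover have "inner (y1 - y2) (x1 - x2) \<le> dist y1 y2 * D"
    unfolding D_def dist_norm by (rule norm_cauchy_schwarz)
  ultimately have "D\<^sup>2 \<le> 2 * (dist y1 y2 + e) * D + (2 * r * e + e\<^sup>2)"
    by (simp add: power2_eq_square algebra_simps)
  then have "D \<le> 2 * (dist y1 y2 + e) + sqrt (2 * r * e + e\<^sup>2)"
    by (rule square_le_linear_imp_le) (use \<open>e > 0\<close> \<open>r > 0\<close> D_def in auto)
  then show ?thesis
    unfolding D_def dist_norm .
qed

definition uniformly_controlled_on ::
    "'a set \<Rightarrow> ('a \<Rightarrow> 'b::metric_space) \<Rightarrow> ('a \<Rightarrow> 'c::metric_space) \<Rightarrow> bool" where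
  "uniformly_controlled_on S g f \<longleftrightarrow>
     (\<forall>\<epsilon>>0. \<exists>\<delta>>0. \<forall>s\<in>S. \<forall>s'\<in>S. dist (g s) (g s') < \<delta> \<longrightarrow> dist (f s) (f s') < \<epsilon>)"

lemma prox_proj_uniformly_controlled:
  fixes Z :: "'w::real_normed_vector \<Rightarrow> 'x::real_inner set"
  assumes "r > 0"
    and Z_cont: "\<forall>\<epsilon>>0. \<exists>\<delta>>0. \<forall>v\<in>A. \<forall>v'\<in>A. norm (v - v') < \<delta> \<longrightarrow> hdist (Z v) (Z v') < ereal \<epsilon>"
    and proj: "\<forall>s\<in>S. w s \<in> A \<and> prox_proj r (Z (w s)) (y s) (x s) \<and> norm (y s - x s) \<le> r / 2"
  shows "uniformly_controlled_on S (\<lambda>s. (y s, w s)) x"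
  unfolding uniformly_controlled_on_def
proof (intro allI impI)
  fix \<epsilon> :: real
  assume "\<epsilon> > 0"
  define h where "h e = 4 * e + sqrt (2 * r * e + e\<^sup>2)" for e
  have "(h \<longlongrightarrow> h 0) (at_right 0)"
    unfolding h_def by (intro tendsto_intros)
  moreover have "h 0 = 0"
    unfolding h_def by simp
  ultimately have "\<forall>\<^sub>F e in at_right 0. h e < \<epsilon>"
    using order_tendstoD(2) \<open>\<epsilon> > 0\<close> by fastforce
  then have "\<forall>\<^sub>F e in at_right 0. 0 < e \<and> h e < \<epsilon>"
    by (rule eventually_conj[OF eventually_at_right_less])
  then obtain e where "e > 0" "h e < \<epsilon>"
    using eventually_happens'[OF trivial_limit_at_right_real] by blast
  obtain \<delta> where "\<delta> > 0"
    and \<delta>: "\<forall>v\<in>A. \<forall>v'\<in>A. norm (v - v') < \<delta> \<longrightarrow> hdist (Z v) (Z v') < ereal e"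
    using Z_cont \<open>e > 0\<close> by blast
  have "dist (x s) (x s') < \<epsilon>"
    if "s \<in> S" "s' \<in> S" "dist (y s, w s) (y s', w s') < min e \<delta>" for s s'
  proof -
    have "dist (y s) (y s') < e" "dist (w s) (w s') < \<delta>"
      using that(3) dist_fst_le[of "(y s, w s)" "(y s', w s')"]
        dist_snd_le[of "(y s, w s)" "(y s', w s')"] by simp_all
    then have "hdist (Z (w s)) (Z (w s')) < ereal e"
      using \<delta> proj that(1,2) by (simp add: dist_norm)
    then have "dist (x s) (x s') \<le> 2 * (dist (y s) (y s') + e) + sqrt (2 * r * e + e\<^sup>2)"
      using prox_proj_hdist_estimate[OF \<open>r > 0\<close>] proj that(1,2) by blast
    also have "\<dots> < h e"
      using \<open>dist (y s) (y s') < e\<close> unfolding h_def by simp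
    finally show ?thesis
      using \<open>h e < \<epsilon>\<close> by simp
  qed
  then show "\<exists>\<delta>>0. \<forall>s\<in>S. \<forall>s'\<in>S. dist (y s, w s) (y s', w s') < \<delta> \<longrightarrow> dist (x s) (x s') < \<epsilon>"
    using \<open>e > 0\<close> \<open>\<delta> > 0\<close> by (intro exI[of _ "min e \<delta>"]) auto
qed

lemma uniformly_controlled_on_convergent:
  fixes f :: "'a \<Rightarrow> 'c::complete_space"
  assumes ctrl: "uniformly_controlled_on S g f"
    and "(g \<longlongrightarrow> l) F" and "eventually (\<lambda>s. s \<in> S) F"
  shows "\<exists>c. (f \<longlongrightarrow> c) F"
proof (cases "F = bot")
  case False
  have "cauchy_filter (filtermap f F)"
    unfolding cauchy_filter_metric_filtermap
  proof (intro allI impI)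
    fix \<epsilon> :: real
    assume "\<epsilon> > 0"
    then obtain \<delta> where "\<delta> > 0"
      and \<delta>: "\<forall>s\<in>S. \<forall>s'\<in>S. dist (g s) (g s') < \<delta> \<longrightarrow> dist (f s) (f s') < \<epsilon>"
      using ctrl unfolding uniformly_controlled_on_def by blast
    let ?P = "\<lambda>s. s \<in> S \<and> dist (g s) l < \<delta> / 2"
    have "eventually ?P F"
      using \<open>eventually (\<lambda>s. s \<in> S) F\<close> tendstoD[OF \<open>(g \<longlongrightarrow> l) F\<close> half_gt_zero[OF \<open>\<delta> > 0\<close>]]
      by (rule eventually_conj)
    moreover have "dist (f s) (f s') < \<epsilon>" if "?P s" "?P s'" for s s'
      using that \<delta> dist_triangle_half_l[of "g s" l \<delta> "g s'"] by (simp add: dist_commute)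
    ultimately show "\<exists>P. eventually P F \<and> (\<forall>s s'. P s \<and> P s' \<longrightarrow> dist (f s) (f s') < \<epsilon>)"
      by blast
  qed
  moreover have "filtermap f F \<noteq> bot"
    using False by (simp add: filtermap_bot_iff)
  ultimately obtain c where "filtermap f F \<le> nhds c"
    using cauchy_filter_complete_converges[OF _ complete_UNIV] by auto
  then show ?thesis
    unfolding filterlim_def by blast
qed simp

lemma uniformly_controlled_on_tendsto:
  assumes ctrl: "uniformly_controlled_on S g f"
    and "(g \<longlongrightarrow> g t) F" and "eventually (\<lambda>s. s \<in> S) F" and "t \<in> S"
  shows "(f \<longlongrightarrow> f t) F"
proof (rule tendstoI)
  fix \<epsilon> :: real
  assume "\<epsilon> > 0"
  then obtain \<delta> where "\<delta> > 0"
    and \<delta>: "\<forall>s\<in>S. \<forall>s'\<in>S. dist (g s) (g s') < \<delta> \<longrightarrow> dist (f s) (f s') < \<epsilon>"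
    using ctrl unfolding uniformly_controlled_on_def by blast
  have "eventually (\<lambda>s. dist (g s) (g t) < \<delta>) F"
    using \<open>(g \<longlongrightarrow> g t) F\<close> \<open>\<delta> > 0\<close> by (rule tendstoD)
  with \<open>eventually (\<lambda>s. s \<in> S) F\<close> show "eventually (\<lambda>s. dist (f s) (f t) < \<epsilon>) F"
    by eventually_elim (use \<delta> \<open>t \<in> S\<close> in blast)
qed

lemma regulated_rc_Pair:
  assumes "regulated_rc T f" and "regulated_rc T g"
  shows "regulated_rc T (\<lambda>t. (f t, g t))"
  using assms unfolding regulated_rc_def by (blast intro: tendsto_Pair)

lemma regulated_rc_uniformly_controlled:
  fixes f :: "real \<Rightarrow> 'c::{real_normed_vector, complete_space}"
  assumes g: "regulated_rc T g" and ctrl: "uniformly_controlled_on {0..T} g f"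
  shows "regulated_rc T f"
  unfolding regulated_rc_def
proof (intro conjI ballI)
  fix t
  assume "t \<in> {0<..T}"
  then obtain l where "(g \<longlongrightarrow> l) (at t within {0..<t})"
    using g unfolding regulated_rc_def by blast
  moreover have "eventually (\<lambda>s. s \<in> {0..T}) (at t within {0..<t})"
    using \<open>t \<in> {0<..T}\<close> by (auto simp: eventually_at_filter)
  ultimately show "\<exists>l. (f \<longlongrightarrow> l) (at t within {0..<t})"
    by (rule uniformly_controlled_on_convergent[OF ctrl])
next
  fix t
  assume "t \<in> {0..<T}"
  then have "(g \<longlongrightarrow> g t) (at t within {t<..T})"
    using g unfolding regulated_rc_def by blast
  moreover have "eventually (\<lambda>s. s \<in> {0..T}) (at t within {t<..T})"
    using \<open>t \<in> {0..<T}\<close> by (auto simp: eventually_at_filter)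
  ultimately show "(f \<longlongrightarrow> f t) (at t within {t<..T})"
    using \<open>t \<in> {0..<T}\<close> by (intro uniformly_controlled_on_tendsto[OF ctrl]) auto
qed

theorem corollary4p4:
  fixes Z :: "'w::banach \<Rightarrow> 'x::{real_inner, complete_space} set"
    and A :: "'w set" and r T :: real
    and y :: "real \<Rightarrow> 'x" and w :: "real \<Rightarrow> 'w" and \<zeta> :: "real \<Rightarrow> 'x"
  assumes "closed A" and "r > 0" and "T > 0"
    and "\<forall>v\<in>A. prox_regular r (Z v)"
    and "\<forall>\<epsilon>>0. \<exists>\<delta>>0. \<forall>v\<in>A. \<forall>v'\<in>A. norm (v - v') < \<delta> \<longrightarrow> hdist (Z v) (Z v') < ereal \<epsilon>"
    and "regulated_rc T y" and "regulated_rc T w"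
    and "\<forall>t\<in>{0..T}. w t \<in> A \<and> infdist (y t) (Z (w t)) \<le> r / 2"
    and "\<forall>t\<in>{0..T}. \<zeta> t \<in> Z (w t) \<and>
           (\<forall>z\<in>Z (w t). inner (y t - \<zeta> t) (\<zeta> t - z)
               + norm (y t - \<zeta> t) / (2 * r) * (norm (\<zeta> t - z))\<^sup>2 \<ge> 0) \<and>
           (\<forall>v\<in>Z (w t). (\<forall>z\<in>Z (w t). inner (y t - v) (v - z)
               + norm (y t - v) / (2 * r) * (norm (v - z))\<^sup>2 \<ge> 0) \<longrightarrow> v = \<zeta> t)"
  shows "regulated_rc T \<zeta>"
proof -
  have "\<forall>t\<in>{0..T}. w t \<in> A \<and> prox_proj r (Z (w t)) (y t) (\<zeta> t) \<and> norm (y t - \<zeta> t) \<le> r / 2"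
  proof
    fix t
    assume t: "t \<in> {0..T}"
    have "w t \<in> A" and close: "infdist (y t) (Z (w t)) \<le> r / 2"
      using assms(8) t by auto
    have proj: "prox_proj r (Z (w t)) (y t) (\<zeta> t)"
      and unique: "\<And>v. prox_proj r (Z (w t)) (y t) v \<Longrightarrow> v = \<zeta> t"
      using assms(9) t unfolding prox_proj_def by blast+
    have "prox_regular r (Z (w t))"
      using assms(4) \<open>w t \<in> A\<close> by blast
    moreover have "infdist (y t) (Z (w t)) < r"
      using close \<open>r > 0\<close> by linarith
    ultimately have "norm (y t - \<zeta> t) = infdist (y t) (Z (w t))"
      using prox_proj_unique_imp_norm_eq_infdist \<open>r > 0\<close> proj unique by blast
    then show "w t \<in> A \<and> prox_proj r (Z (w t)) (y t) (\<zeta> t) \<and> norm (y t - \<zeta> t) \<le> r / 2"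
      using \<open>w t \<in> A\<close> proj close by simp
  qed
  then have "uniformly_controlled_on {0..T} (\<lambda>t. (y t, w t)) \<zeta>"
    by (rule prox_proj_uniformly_controlled[OF \<open>r > 0\<close> assms(5)])
  then show ?thesis
    by (rule regulated_rc_uniformly_controlled[OF regulated_rc_Pair[OF assms(6,7)]])
qed

end
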